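(* There is an absolute constant $\epsilon_0>0$ such that every nonadaptive, $1$-sided error unateness tester for functions $f:\{0,1\}^d\to\{0,1\}$ with proximity parameter $\epsilon_0$ must make $\Omega(\sqrt d)$ queries.
   Context: A function $f:\{0,1\}^d\to\mathbb{R}$ is unate if each dimension $i\in[d]$ can be assigned a direction up or down such that: if up, $f(x)\le f(x+e_i)$ for all $x$ with $x_i=0$ (here $x+e_i$ is $x$ with the $i$-th bit set to 1); if down, $f(x)\ge f(x+e_i)$ for all such $x$. The distance between two functions is the fraction of points where they differ; $f$ is $\epsilon$-far from unate if its distance to every unate function is at least $\epsilon$. A unateness tester is a randomized algorithm that, given $\epsilon$ and oracle (query) access to $f$, accepts with probability at least $2/3$ if $f$ is unate and rejects with probability at least $2/3$ if $f$ is $\epsilon$-far from unate. It is nonadaptive if it chooses all its queries before seeing any answers, and has $1$-sided error if it accepts every unate function with probability $1$. *)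

theory Defs
  imports "HOL-Probability.Probability"
begin

text \<open>Points of the hypercube {0,1}^d are encoded as subsets x of {..<d}:
  bit i of x is 1 iff i is in x; x + e_i is insert i x.
  Boolean functions are f :: nat set => bool (False = 0, True = 1);
  only their values on the cube matter.\<close>

definition cube :: "nat \<Rightarrow> nat set set" where
  "cube d = Pow {..<d}"

definition unate :: "nat \<Rightarrow> (nat set \<Rightarrow> 'b::order) \<Rightarrow> bool" where
  "unate d f \<longleftrightarrow> (\<exists>up :: nat \<Rightarrow> bool. \<forall>i<d. \<forall>x\<in>cube d. i \<notin> x \<longrightarrow>
      (if up i then f x \<le> f (insert i x) else f x \<ge> f (insert i x)))"

definition dist_cube :: "nat \<Rightarrow> (nat set \<Rightarrow> 'b) \<Rightarrow> (nat set \<Rightarrow> 'b) \<Rightarrow> real" where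
  "dist_cube d f g = real (card {x\<in>cube d. f x \<noteq> g x}) / 2 ^ d"

definition far_from_unate :: "nat \<Rightarrow> real \<Rightarrow> (nat set \<Rightarrow> bool) \<Rightarrow> bool" where
  "far_from_unate d \<epsilon> f \<longleftrightarrow> (\<forall>g :: nat set \<Rightarrow> bool. unate d g \<longrightarrow> dist_cube d f g \<ge> \<epsilon>)"

text \<open>A nonadaptive randomized tester: a probability distribution over pairs (Q, D)
  of a query set Q and a decision rule D (True = accept) whose output depends only
  on the answers to the queries in Q.\<close>

type_synonym tester = "(nat set set \<times> ((nat set \<Rightarrow> bool) \<Rightarrow> bool)) pmf"

definition accept_prob :: "tester \<Rightarrow> (nat set \<Rightarrow> bool) \<Rightarrow> real" where
  "accept_prob T f = measure_pmf.prob T {(Q, D). D f}"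

definition nonadaptive_query_bounded :: "nat \<Rightarrow> nat \<Rightarrow> tester \<Rightarrow> bool" where
  "nonadaptive_query_bounded d q T \<longleftrightarrow>
     (\<forall>(Q, D)\<in>set_pmf T. Q \<subseteq> cube d \<and> card Q \<le> q \<and>
        (\<forall>f g. (\<forall>x\<in>Q. f x = g x) \<longrightarrow> D f = D g))"

definition one_sided_unateness_tester :: "nat \<Rightarrow> real \<Rightarrow> nat \<Rightarrow> tester \<Rightarrow> bool" where
  "one_sided_unateness_tester d \<epsilon> q T \<longleftrightarrow>
     nonadaptive_query_bounded d q T \<and>
     (\<forall>f. unate d f \<longrightarrow> accept_prob T f = 1) \<and>
     (\<forall>f. far_from_unate d \<epsilon> f \<longrightarrow> 1 - accept_prob T f \<ge> 2/3)"

end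

theory Submission
  imports Defs
begin

text \<open>For coordinates \<open>i \<noteq> j\<close> let \<open>f\<^sub>i\<^sub>j\<close> be \<open>x\<^sub>i = x\<^sub>j\<close> on the middle band of the cube (Hamming
  weight within \<open>\<approx>\<surd>d\<close> of \<open>d/2\<close>), 1 above it and 0 below it. By Chebyshev, for at least 3/4 of the
  points \<open>x\<close> with \<open>x\<^sub>i = x\<^sub>j = 0\<close> the square spanned by directions \<open>i, j\<close> lies in the band, and
  no unate function agrees with \<open>x\<^sub>i = x\<^sub>j\<close> on such a square; so \<open>f\<^sub>i\<^sub>j\<close> is 3/16-far from unate.

  A one-sided tester can only reject \<open>f\<^sub>i\<^sub>j\<close> if its queries contain a violation of monotonicity,
  since otherwise the answers extend to a monotone function, which it must accept. Such a
  violation consists of two comparable queried points in the band whose difference contains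
  \<open>i\<close> or \<open>j\<close>. Band points differ in \<open>O(\<surd>d)\<close> coordinates, and a spanning-forest argument puts all
  these differences into one set \<open>S\<close> of \<open>O(q\<surd>d)\<close> coordinates. Hence a fixed query set rejects at
  most \<open>2d|S|\<close> of the \<open>d(d-1)\<close> functions \<open>f\<^sub>i\<^sub>j\<close>, while each must be rejected with probability 2/3;
  averaging gives \<open>q = \<Omega>(\<surd>d)\<close>.\<close>

lemma sum_Pow_centered_card_square:
  assumes "finite A"
  shows "(\<Sum>x\<in>Pow A. (2 * int (card x) - int (card A))^2) = int (card A) * 2 ^ card A"
  using assms
proof (induction A rule: finite_induct)
  case empty
  then show ?case by simp
next
  case (insert a A)
  let ?s = "\<lambda>x. 2 * int (card x) - int (card A)"
  have inj: "inj_on (insert a) (Pow A)"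
    using insert.hyps(2) by (intro inj_onI) (metis Diff_insert_absorb PowD subsetD)
  have card_insert_a: "card (insert a x) = Suc (card x)" if "x \<in> Pow A" for x
    using that insert.hyps finite_subset by (metis PowD card_insert_disjoint subsetD)
  have disj: "Pow A \<inter> insert a ` Pow A = {}"
    using insert.hyps(2) by blast
  have split: "(\<Sum>x\<in>Pow (insert a A). (2 * int (card x) - int (card (insert a A)))^2)
      = (\<Sum>x\<in>Pow A. (?s x - 1)^2) + (\<Sum>x\<in>Pow A. (2 * int (card (insert a x)) - int (card A) - 1)^2)"
    using insert.hyps disj by (simp add: Pow_insert sum.union_disjoint sum.reindex inj algebra_simps)
  have shift: "(\<Sum>x\<in>Pow A. (2 * int (card (insert a x)) - int (card A) - 1)^2) = (\<Sum>x\<in>Pow A. (?s x + 1)^2)"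
    using card_insert_a by (intro sum.cong) (simp_all add: algebra_simps)
  have square_sum: "(?s x - 1)^2 + (?s x + 1)^2 = 2 * (?s x)^2 + 2" for x
    by (simp add: power2_eq_square algebra_simps)
  have "(\<Sum>x\<in>Pow A. (?s x - 1)^2) + (\<Sum>x\<in>Pow A. (?s x + 1)^2) = (\<Sum>x\<in>Pow A. 2 * (?s x)^2 + 2)"
    by (simp only: sum.distrib [symmetric] square_sum)
  then show ?case
    using insert split shift by (simp add: sum.distrib sum_distrib_left [symmetric] card_Pow algebra_simps)
qed

lemma card_Pow_far_from_middle_le:
  assumes "finite A" "card A \<le> r" "0 < r"
  shows "4 * card {x\<in>Pow A. 4 * int r \<le> (2 * int (card x) - int (card A))^2} \<le> 2 ^ card A"
proof -
  let ?s = "\<lambda>x. (2 * int (card x) - int (card A))^2"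
  let ?B = "{x\<in>Pow A. 4 * int r \<le> ?s x}"
  have "int (4 * r * card ?B) = (\<Sum>x\<in>?B. 4 * int r)" by simp
  also have "\<dots> \<le> (\<Sum>x\<in>?B. ?s x)" by (rule sum_mono) blast
  also have "\<dots> \<le> (\<Sum>x\<in>Pow A. ?s x)"
    using assms(1) by (intro sum_mono2) auto
  also have "\<dots> = int (card A) * 2 ^ card A"
    using assms(1) by (rule sum_Pow_centered_card_square)
  also have "\<dots> \<le> int (r * 2 ^ card A)"
    using assms(2) by simp
  finally have "r * (4 * card ?B) \<le> r * 2 ^ card A"
    by (simp only: of_nat_le_iff mult_ac)
  then show ?thesis
    using assms(3) by simp
qed

lemma card_Pow_near_middle_ge:
  assumes "finite A" "card A + 2 = d"
  shows "3 * 2 ^ card A \<le> 4 * card {x\<in>Pow A. \<bar>2 * real (card x) - real (card A)\<bar> < 2 * sqrt (real d)}"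
proof -
  let ?G = "{x\<in>Pow A. \<bar>2 * real (card x) - real (card A)\<bar> < 2 * sqrt (real d)}"
  let ?B = "{x\<in>Pow A. 4 * int d \<le> (2 * int (card x) - int (card A))^2}"
  have "Pow A \<subseteq> ?G \<union> ?B"
  proof
    fix x assume x: "x \<in> Pow A"
    show "x \<in> ?G \<union> ?B"
    proof (cases "x \<in> ?B")
      case False
      with x have "(2 * int (card x) - int (card A))^2 < 4 * int d"
        by simp
      then have "real_of_int ((2 * int (card x) - int (card A))^2) < real_of_int (4 * int d)"
        by (simp only: of_int_less_iff)
      then have "(2 * real (card x) - real (card A))^2 < 4 * real d"
        by simp
      then have "\<bar>2 * real (card x) - real (card A)\<bar> < sqrt (4 * real d)"
        by (intro real_less_rsqrt) simp
      with x show ?thesis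
        by (simp add: real_sqrt_mult)
    qed simp
  qed
  then have "2 ^ card A \<le> card ?G + card ?B"
    using assms(1) card_mono[of "?G \<union> ?B" "Pow A"] card_Un_le[of ?G ?B] by (simp add: card_Pow)
  moreover have "4 * card ?B \<le> 2 ^ card A"
    using assms by (intro card_Pow_far_from_middle_le) auto
  ultimately show ?thesis by linarith
qed

lemma card_image_merge_classes:
  assumes "finite V" "x \<in> V" "y \<in> V" "rep x \<noteq> rep y"
  shows "card ((\<lambda>z. if rep z = rep y then rep x else rep z) ` V) + 1 = card (rep ` V)"
proof -
  have "(\<lambda>z. if rep z = rep y then rep x else rep z) ` V = rep ` V - {rep y}"
    using assms(2-4) by (auto simp: image_iff)
  moreover have "finite (rep ` V)" "rep y \<in> rep ` V"
    using assms(1,3) by simp_all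
  ultimately show ?thesis
    using card.remove[of "rep ` V" "rep y"] by simp
qed

lemma merge_classes_cover:
  fixes \<delta> :: "'v \<Rightarrow> 'v \<Rightarrow> 'a set"
  assumes triangle: "\<And>u v w. \<delta> u w \<subseteq> \<delta> u v \<union> \<delta> v w" and sym: "\<And>u v. \<delta> u v = \<delta> v u"
    and rep_S: "\<forall>u\<in>V. \<forall>w\<in>V. rep u = rep w \<longrightarrow> \<delta> u w \<subseteq> S" and "x \<in> V" "y \<in> V"
    and "u \<in> V" "w \<in> V"
    and "(if rep u = rep y then rep x else rep u) = (if rep w = rep y then rep x else rep w)"
  shows "\<delta> u w \<subseteq> S \<union> \<delta> x y"
proof -
  have chain: "\<delta> u w \<subseteq> \<delta> u a \<union> \<delta> a b \<union> \<delta> b w" for a b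
    using triangle[of u w a] triangle[of a w b] by blast
  consider "rep u = rep w" | "rep u = rep x" "rep w = rep y" | "rep u = rep y" "rep w = rep x"
    using assms(8) by (auto split: if_splits)
  then show ?thesis
  proof cases
    case 1
    then show ?thesis using rep_S assms(6,7) by auto
  next
    case 2
    then have "\<delta> u x \<subseteq> S" "\<delta> y w \<subseteq> S"
      using rep_S assms(4-7) by simp_all
    then show ?thesis
      using chain[of x y] by blast
  next
    case 3
    then have "\<delta> u y \<subseteq> S" "\<delta> x w \<subseteq> S"
      using rep_S assms(4-7) by simp_all
    then show ?thesis
      using chain[of y x] sym[of y x] by blast
  qed
qed

text \<open>A union-find labelling \<open>rep\<close> built edge by edge: merging two classes along an edge \<open>(x, y)\<close>
  costs at most \<open>W\<close> new elements \<open>\<delta> x y\<close> of \<open>S\<close> and lowers the number of classes by one.\<close>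

lemma exists_cover_along_edges:
  fixes \<delta> :: "'v \<Rightarrow> 'v \<Rightarrow> 'a set" and E :: "('v \<times> 'v) set"
  assumes triangle: "\<And>u v w. \<delta> u w \<subseteq> \<delta> u v \<union> \<delta> v w"
    and sym: "\<And>u v. \<delta> u v = \<delta> v u" and refl: "\<And>u. \<delta> u u = {}"
    and "finite E" "finite V" "E \<subseteq> V \<times> V"
    and "\<And>x y. (x, y) \<in> E \<Longrightarrow> finite (\<delta> x y) \<and> card (\<delta> x y) \<le> W"
  shows "\<exists>(rep :: 'v \<Rightarrow> 'v) S. finite S \<and> card S + W * card (rep ` V) \<le> W * card V \<and>
     (\<forall>u\<in>V. \<forall>w\<in>V. rep u = rep w \<longrightarrow> \<delta> u w \<subseteq> S) \<and> (\<forall>(x, y)\<in>E. rep x = rep y)"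
  using assms(4-)
proof (induction E rule: finite_induct)
  case empty
  show ?case by (intro exI[of _ "\<lambda>x. x"] exI[of _ "{}"]) (auto simp: refl)
next
  case (insert e E)
  obtain x y where e: "e = (x, y)" by fastforce
  have "\<exists>(rep :: 'v \<Rightarrow> 'v) S. finite S \<and> card S + W * card (rep ` V) \<le> W * card V \<and>
     (\<forall>u\<in>V. \<forall>w\<in>V. rep u = rep w \<longrightarrow> \<delta> u w \<subseteq> S) \<and> (\<forall>(x, y)\<in>E. rep x = rep y)"
    by (rule insert.IH[OF insert.prems(1)]) (use insert.prems(2,3) in auto)
  then obtain rep :: "'v \<Rightarrow> 'v" and S where S: "finite S" "card S + W * card (rep ` V) \<le> W * card V"
    and rep_S: "\<forall>u\<in>V. \<forall>w\<in>V. rep u = rep w \<longrightarrow> \<delta> u w \<subseteq> S"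
    and rep_E: "\<forall>(a, b)\<in>E. rep a = rep b"
    by blast
  have xy: "x \<in> V" "y \<in> V" "finite (\<delta> x y)" "card (\<delta> x y) \<le> W"
    using insert.prems e by auto
  show ?case
  proof (cases "rep x = rep y")
    case True
    then show ?thesis
      using S rep_S rep_E e by auto
  next
    case False
    define rep' where "rep' = (\<lambda>z. if rep z = rep y then rep x else rep z)"
    have "card (rep' ` V) + 1 = card (rep ` V)"
      unfolding rep'_def using insert.prems(1) xy(1,2) False by (rule card_image_merge_classes)
    then have "W * card (rep ` V) = W * card (rep' ` V) + W"
      by (metis distrib_left mult.right_neutral)
    moreover have "card (S \<union> \<delta> x y) \<le> card S + W"
      using card_Un_le[of S "\<delta> x y"] xy by linarith
    ultimately have "card (S \<union> \<delta> x y) + W * card (rep' ` V) \<le> W * card V"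
      using S(2) by linarith
    moreover have "\<forall>u\<in>V. \<forall>w\<in>V. rep' u = rep' w \<longrightarrow> \<delta> u w \<subseteq> S \<union> \<delta> x y"
      unfolding rep'_def using merge_classes_cover[OF triangle sym rep_S xy(1,2)] by blast
    moreover have "\<forall>(a, b)\<in>insert e E. rep' a = rep' b"
      using rep_E e unfolding rep'_def by auto
    moreover have "finite (S \<union> \<delta> x y)"
      using S(1) xy(3) by simp
    ultimately show ?thesis
      by blast
  qed
qed

lemma small_cover_of_comparable_diffs:
  fixes V :: "'a set set"
  assumes "finite V" and "\<And>x y. x \<in> V \<Longrightarrow> y \<in> V \<Longrightarrow> x \<subseteq> y \<Longrightarrow> finite y \<and> card (y - x) \<le> W"
  shows "\<exists>S. finite S \<and> card S \<le> W * card V \<and> (\<forall>x\<in>V. \<forall>y\<in>V. x \<subseteq> y \<longrightarrow> y - x \<subseteq> S)"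
proof -
  let ?E = "{(x, y)\<in>V \<times> V. x \<subseteq> y}"
  have "finite ?E"
    by (rule finite_subset[of _ "V \<times> V"]) (use assms(1) in auto)
  moreover have "finite (sym_diff x y) \<and> card (sym_diff x y) \<le> W" if "(x, y) \<in> ?E" for x y
  proof -
    from that have "x \<in> V" "y \<in> V" "x \<subseteq> y" by auto
    moreover from \<open>x \<subseteq> y\<close> have "sym_diff x y = y - x" by blast
    ultimately show ?thesis
      using assms(2) by simp
  qed
  ultimately have "\<exists>(rep :: 'a set \<Rightarrow> 'a set) S. finite S \<and> card S + W * card (rep ` V) \<le> W * card V \<and>
     (\<forall>u\<in>V. \<forall>w\<in>V. rep u = rep w \<longrightarrow> sym_diff u w \<subseteq> S) \<and> (\<forall>(x, y)\<in>?E. rep x = rep y)"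
    by (intro exists_cover_along_edges assms(1)) blast+
  then show ?thesis
  proof (elim exE conjE)
    fix rep :: "'a set \<Rightarrow> 'a set" and S
    assume S: "finite S" "card S + W * card (rep ` V) \<le> W * card V"
      and rep_S: "\<forall>u\<in>V. \<forall>w\<in>V. rep u = rep w \<longrightarrow> sym_diff u w \<subseteq> S"
      and rep_E: "\<forall>(x, y)\<in>?E. rep x = rep y"
    have "y - x \<subseteq> S" if "x \<in> V" "y \<in> V" "x \<subseteq> y" for x y
    proof -
      have "rep x = rep y"
        using rep_E that by simp
      then have "sym_diff x y \<subseteq> S"
        using rep_S that by simp
      then show ?thesis by blast
    qed
    with S show ?thesis
      by (intro exI[of _ S]) auto
  qed
qed

definition band_radius :: "nat \<Rightarrow> real" where
  "band_radius d = 2 * sqrt (real d) + 2"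

definition in_band :: "nat \<Rightarrow> nat set \<Rightarrow> bool" where
  "in_band d z \<longleftrightarrow> \<bar>2 * real (card z) - real d\<bar> \<le> band_radius d"

definition truncated_xnor :: "nat \<Rightarrow> nat \<Rightarrow> nat \<Rightarrow> nat set \<Rightarrow> bool" where
  "truncated_xnor d i j z =
     (if real d + band_radius d < 2 * real (card z) then True
      else if 2 * real (card z) < real d - band_radius d then False
      else (i \<in> z \<longleftrightarrow> j \<in> z))"

lemma truncated_xnor_violation:
  assumes "x \<subseteq> y" "finite y" "truncated_xnor d i j x" "\<not> truncated_xnor d i j y"
  shows "in_band d x \<and> in_band d y \<and> (i \<in> y - x \<or> j \<in> y - x)"
proof -
  have "real (card x) \<le> real (card y)"
    using card_mono[OF assms(2,1)] by simp
  then show ?thesis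
    using assms unfolding truncated_xnor_def in_band_def by (auto split: if_splits)
qed

lemma card_diff_in_band_le:
  assumes "in_band d x" "in_band d y" "x \<subseteq> y" "finite y"
  shows "card (y - x) \<le> nat \<lfloor>band_radius d\<rfloor>"
proof -
  have "real (card (y - x)) = real (card y) - real (card x)"
    using assms(3,4) card_mono[OF assms(4,3)] by (simp add: card_Diff_subset finite_subset of_nat_diff)
  then have "real (card (y - x)) \<le> band_radius d"
    using assms(1,2) unfolding in_band_def by linarith
  then show ?thesis
    by (simp add: le_nat_floor)
qed

lemma exists_unate_extension:
  assumes "\<And>x y. x \<in> Q \<Longrightarrow> y \<in> Q \<Longrightarrow> x \<subseteq> y \<Longrightarrow> f x \<Longrightarrow> f y"
  shows "\<exists>g. unate d g \<and> (\<forall>z\<in>Q. g z = f z)"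
proof -
  define g where "g z \<longleftrightarrow> (\<exists>x\<in>Q. x \<subseteq> z \<and> f x)" for z
  have "unate d g"
    unfolding unate_def by (rule exI[of _ "\<lambda>_. True"]) (auto simp: g_def le_bool_def)
  moreover have "\<forall>z\<in>Q. g z = f z"
    unfolding g_def using assms by blast
  ultimately show ?thesis by blast
qed

lemma truncated_xnor_in_band:
  assumes "in_band d z"
  shows "truncated_xnor d i j z = (i \<in> z \<longleftrightarrow> j \<in> z)"
  using assms unfolding in_band_def truncated_xnor_def by auto

lemma unate_not_xnor_on_square:
  assumes "unate d g" "x \<in> cube d" "i < d" "j < d" "i \<noteq> j" "i \<notin> x" "j \<notin> x"
  shows "\<not> (g x \<and> \<not> g (insert i x) \<and> \<not> g (insert j x) \<and> g (insert i (insert j x)))"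
proof -
  obtain up where up: "\<forall>k<d. \<forall>x\<in>cube d. k \<notin> x \<longrightarrow>
      (if up k then g x \<le> g (insert k x) else g (insert k x) \<le> g x)"
    using assms(1) unfolding unate_def by blast
  have "insert j x \<in> cube d"
    using assms(2,4) unfolding cube_def by simp
  then have "if up i then g x \<le> g (insert i x) else g (insert i x) \<le> g x"
    "if up i then g (insert j x) \<le> g (insert i (insert j x)) else g (insert i (insert j x)) \<le> g (insert j x)"
    using up assms(2,3,5,6) by auto
  then show ?thesis
    by (cases "up i") auto
qed

lemma truncated_xnor_differs_on_square:
  assumes "unate d g" "i < d" "j < d" "i \<noteq> j" "x \<subseteq> {..<d} - {i, j}"
    and near: "\<bar>2 * real (card x) - real (d - 2)\<bar> < 2 * sqrt (real d)"
  shows "\<exists>z\<in>cube d. z - {i, j} = x \<and> truncated_xnor d i j z \<noteq> g z"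
proof -
  have x: "x \<in> cube d" "finite x" "i \<notin> x" "j \<notin> x"
    using assms(5) finite_subset unfolding cube_def by auto
  have band: "in_band d z" if "card z = card x + k" "k \<le> 2" for z k
  proof -
    have "2 * real (card z) - real d = (2 * real (card x) - real (d - 2)) + 2 * real k - 2"
      using that(1) assms(2-4) by (simp add: of_nat_diff)
    then show ?thesis
      using near that(2) unfolding in_band_def band_radius_def by auto
  qed
  have "in_band d x" "in_band d (insert i x)" "in_band d (insert j x)" "in_band d (insert i (insert j x))"
    using band[of x 0] band[of "insert i x" 1] band[of "insert j x" 1] band[of "insert i (insert j x)" 2]
      x assms(4) by simp_all
  then have "truncated_xnor d i j x" "\<not> truncated_xnor d i j (insert i x)"
    "\<not> truncated_xnor d i j (insert j x)" "truncated_xnor d i j (insert i (insert j x))"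
    using x assms(4) by (simp_all add: truncated_xnor_in_band)
  moreover have "\<not> (g x \<and> \<not> g (insert i x) \<and> \<not> g (insert j x) \<and> g (insert i (insert j x)))"
    using unate_not_xnor_on_square assms(1-4) x by blast
  moreover have "insert i x \<in> cube d" "insert j x \<in> cube d" "insert i (insert j x) \<in> cube d"
    using x(1) assms(2,3) unfolding cube_def by auto
  moreover have "x - {i, j} = x" "insert i x - {i, j} = x" "insert j x - {i, j} = x"
    "insert i (insert j x) - {i, j} = x"
    using x by auto
  ultimately show ?thesis
    using x(1) by (metis (no_types, lifting))
qed

lemma truncated_xnor_far_from_unate:
  assumes "i < d" "j < d" "i \<noteq> j"
  shows "far_from_unate d (3/16) (truncated_xnor d i j)"
  unfolding far_from_unate_def
proof (intro allI impI)
  fix g :: "nat set \<Rightarrow> bool"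
  assume "unate d g"
  define A where "A = {..<d} - {i, j}"
  define G where "G = {x\<in>Pow A. \<bar>2 * real (card x) - real (card A)\<bar> < 2 * sqrt (real d)}"
  define Bad where "Bad = {z\<in>cube d. truncated_xnor d i j z \<noteq> g z}"
  have card_A: "card A + 2 = d"
    using assms unfolding A_def by (simp add: card_Diff_subset)
  have "\<forall>x\<in>G. \<exists>z\<in>cube d. z - {i, j} = x \<and> truncated_xnor d i j z \<noteq> g z"
    using truncated_xnor_differs_on_square[OF \<open>unate d g\<close> assms] card_A
    unfolding G_def A_def by (metis (no_types, lifting) Pow_iff add_diff_cancel_right' mem_Collect_eq)
  then have "\<forall>x\<in>G. \<exists>z. z \<in> Bad \<and> z - {i, j} = x"
    unfolding Bad_def by blast
  then obtain h where h: "\<forall>x\<in>G. h x \<in> Bad \<and> h x - {i, j} = x"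
    by (rule bchoice[THEN exE])
  have "inj_on h G"
    by (rule inj_on_inverseI[of _ "\<lambda>z. z - {i, j}"]) (use h in blast)
  then have "card G \<le> card Bad"
    using h by (intro card_inj_on_le) (auto simp: Bad_def cube_def)
  moreover have "3 * 2 ^ card A \<le> 4 * card G"
    unfolding G_def using card_A by (intro card_Pow_near_middle_ge) (auto simp: A_def)
  ultimately have "3 * 2 ^ card A \<le> 4 * card Bad"
    by linarith
  then have "real (3 * 2 ^ card A) \<le> real (4 * card Bad)"
    by (simp only: of_nat_le_iff)
  then have "3 / 16 * (2::real) ^ d \<le> real (card Bad)"
    unfolding card_A[symmetric] power_add by simp
  then show "3/16 \<le> dist_cube d (truncated_xnor d i j) g"
    unfolding dist_cube_def Bad_def[symmetric] by (simp add: le_divide_eq)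
qed

lemma accepts_of_accept_prob_eq_1:
  assumes "accept_prob T g = 1" "(Q, D) \<in> set_pmf T"
  shows "D g"
proof -
  have "AE \<omega> in measure_pmf T. \<omega> \<in> {(Q, D). D g}"
    using assms(1) unfolding accept_prob_def by (subst (asm) measure_pmf.prob_eq_1) auto
  then show ?thesis
    using assms(2) by (auto simp: AE_measure_pmf_iff)
qed

lemma one_minus_accept_prob: "1 - accept_prob T f = measure_pmf.prob T {(Q, D). \<not> D f}"
proof -
  have "{(Q, D). \<not> D f} = space (measure_pmf T) - {(Q, D). D f}" by auto
  then show ?thesis
    unfolding accept_prob_def by (simp only:) (subst measure_pmf.prob_compl; simp)
qed

lemma accepts_if_monotone_on_queries:
  assumes "\<forall>f g. (\<forall>x\<in>Q. f x = g x) \<longrightarrow> D f = D g" "\<forall>g. unate d g \<longrightarrow> D g"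
    and "\<And>x y. x \<in> Q \<Longrightarrow> y \<in> Q \<Longrightarrow> x \<subseteq> y \<Longrightarrow> f x \<Longrightarrow> f y"
  shows "D f"
proof -
  have "\<exists>g. unate d g \<and> (\<forall>z\<in>Q. g z = f z)"
    using assms(3) by (rule exists_unate_extension)
  then obtain g where "unate d g" "\<forall>z\<in>Q. g z = f z"
    by blast
  moreover have "D g = D f"
    using assms(1)[rule_format, of g f] \<open>\<forall>z\<in>Q. g z = f z\<close> by simp
  ultimately show ?thesis
    using assms(2) by simp
qed

definition distinct_coordinate_pairs :: "nat \<Rightarrow> (nat \<times> nat) set" where
  "distinct_coordinate_pairs d = Sigma {..<d} (\<lambda>i. {..<d} - {i})"

lemma card_distinct_coordinate_pairs: "card (distinct_coordinate_pairs d) = d * (d - 1)"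
  unfolding distinct_coordinate_pairs_def by simp

lemma truncated_xnor_monotone_off_cover:
  assumes "\<And>y. y \<in> Q \<Longrightarrow> finite y"
    and cover: "\<forall>x\<in>{z\<in>Q. in_band d z}. \<forall>y\<in>{z\<in>Q. in_band d z}. x \<subseteq> y \<longrightarrow> y - x \<subseteq> S"
    and "i \<notin> S" "j \<notin> S" "x \<in> Q" "y \<in> Q" "x \<subseteq> y" "truncated_xnor d i j x"
  shows "truncated_xnor d i j y"
proof (rule ccontr)
  assume "\<not> truncated_xnor d i j y"
  with assms(1,5-8) have "in_band d x \<and> in_band d y \<and> (i \<in> y - x \<or> j \<in> y - x)"
    by (intro truncated_xnor_violation) auto
  with cover assms(3-7) show False
    by blast
qed

lemma card_rejected_pairs_le:
  assumes Q: "Q \<subseteq> cube d" "card Q \<le> q"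
    and respects: "\<forall>f g. (\<forall>x\<in>Q. f x = g x) \<longrightarrow> D f = D g"
    and accepts_unate: "\<forall>g. unate d g \<longrightarrow> D g"
  shows "card {(i, j)\<in>distinct_coordinate_pairs d. \<not> D (truncated_xnor d i j)}
    \<le> 2 * d * (nat \<lfloor>band_radius d\<rfloor> * q)"
proof -
  let ?W = "nat \<lfloor>band_radius d\<rfloor>"
  define V where "V = {z\<in>Q. in_band d z}"
  have "finite Q" and finite_point: "\<And>y. y \<in> Q \<Longrightarrow> finite y"
    using Q(1) finite_subset unfolding cube_def by auto
  then have "finite V" "card V \<le> q"
    using card_mono[of Q V] Q(2) unfolding V_def by auto
  moreover have "\<exists>S. finite S \<and> card S \<le> ?W * card V \<and> (\<forall>x\<in>V. \<forall>y\<in>V. x \<subseteq> y \<longrightarrow> y - x \<subseteq> S)"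
    using \<open>finite V\<close> card_diff_in_band_le finite_point unfolding V_def
    by (intro small_cover_of_comparable_diffs) auto
  ultimately obtain S where S: "finite S" "card S \<le> ?W * q"
    and cover: "\<forall>x\<in>V. \<forall>y\<in>V. x \<subseteq> y \<longrightarrow> y - x \<subseteq> S"
    by (meson le_trans mult_le_mono2)
  have "{(i, j)\<in>distinct_coordinate_pairs d. \<not> D (truncated_xnor d i j)} \<subseteq> S \<times> {..<d} \<union> {..<d} \<times> S"
  proof
    fix p assume p: "p \<in> {(i, j)\<in>distinct_coordinate_pairs d. \<not> D (truncated_xnor d i j)}"
    then obtain i j where ij: "p = (i, j)" "i < d" "j < d" "\<not> D (truncated_xnor d i j)"
      unfolding distinct_coordinate_pairs_def by auto
    show "p \<in> S \<times> {..<d} \<union> {..<d} \<times> S"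
    proof (rule ccontr)
      assume "p \<notin> S \<times> {..<d} \<union> {..<d} \<times> S"
      with ij have "i \<notin> S" "j \<notin> S" by auto
      have monotone: "truncated_xnor d i j y"
        if "x \<in> Q" "y \<in> Q" "x \<subseteq> y" "truncated_xnor d i j x" for x y
        using finite_point cover[unfolded V_def] \<open>i \<notin> S\<close> \<open>j \<notin> S\<close> that
        by (rule truncated_xnor_monotone_off_cover)
      have "D (truncated_xnor d i j)"
        using respects accepts_unate monotone by (rule accepts_if_monotone_on_queries)
      with ij(4) show False ..
    qed
  qed
  then have "card {(i, j)\<in>distinct_coordinate_pairs d. \<not> D (truncated_xnor d i j)}
      \<le> card (S \<times> {..<d} \<union> {..<d} \<times> S)"
    using S(1) by (intro card_mono) simp_all
  also have "\<dots> \<le> card (S \<times> {..<d}) + card ({..<d} \<times> S)"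
    by (rule card_Un_le)
  also have "\<dots> = 2 * d * card S"
    by (simp add: card_cartesian_product)
  also have "\<dots> \<le> 2 * d * (?W * q)"
    using S(2) by simp
  finally show ?thesis .
qed

lemma sum_prob_le_of_count_le:
  fixes Ev :: "'b \<Rightarrow> 'a set"
  assumes "finite P" and "\<And>\<omega>. \<omega> \<in> set_pmf T \<Longrightarrow> card {p\<in>P. \<omega> \<in> Ev p} \<le> M"
  shows "(\<Sum>p\<in>P. measure_pmf.prob T (Ev p)) \<le> real M"
proof -
  have integrable: "integrable (measure_pmf T) (indicat_real (Ev p))" for p
    by (rule integrable_real_indicator) (auto simp: measure_pmf.emeasure_finite less_top[symmetric])
  have "(\<Sum>p\<in>P. measure_pmf.prob T (Ev p)) = measure_pmf.expectation T (\<lambda>\<omega>. \<Sum>p\<in>P. indicat_real (Ev p) \<omega>)"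
    using integrable by (simp add: Bochner_Integration.integral_sum)
  also have "\<dots> \<le> real M"
  proof (rule measure_pmf.integral_le_const)
    show "integrable (measure_pmf T) (\<lambda>\<omega>. \<Sum>p\<in>P. indicat_real (Ev p) \<omega>)"
      using integrable by simp
    show "AE \<omega> in measure_pmf T. (\<Sum>p\<in>P. indicat_real (Ev p) \<omega>) \<le> real M"
    proof (rule AE_pmfI)
      fix \<omega> assume "\<omega> \<in> set_pmf T"
      have "(\<Sum>p\<in>P. indicat_real (Ev p) \<omega>) = real (card {p\<in>P. \<omega> \<in> Ev p})"
        using assms(1) by (simp add: indicator_def sum.If_cases Int_def)
      with assms(2)[OF \<open>\<omega> \<in> set_pmf T\<close>] show "(\<Sum>p\<in>P. indicat_real (Ev p) \<omega>) \<le> real M"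
        by simp
    qed
  qed
  finally show ?thesis .
qed

lemma sum_reject_prob_le:
  assumes bounded: "nonadaptive_query_bounded d q T"
    and one_sided: "\<forall>g. unate d g \<longrightarrow> accept_prob T g = 1"
  shows "(\<Sum>(i, j)\<in>distinct_coordinate_pairs d. 1 - accept_prob T (truncated_xnor d i j))
    \<le> real (2 * d * (nat \<lfloor>band_radius d\<rfloor> * q))"
proof -
  let ?P = "distinct_coordinate_pairs d"
  let ?rejects = "\<lambda>(i, j). {(Q, D). \<not> D (truncated_xnor d i j)}"
  have "finite ?P"
    unfolding distinct_coordinate_pairs_def by simp
  have "(\<Sum>(i, j)\<in>?P. 1 - accept_prob T (truncated_xnor d i j)) = (\<Sum>p\<in>?P. measure_pmf.prob T (?rejects p))"
    by (intro sum.cong) (auto simp: one_minus_accept_prob)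
  also have "\<dots> \<le> real (2 * d * (nat \<lfloor>band_radius d\<rfloor> * q))"
  proof (rule sum_prob_le_of_count_le[OF \<open>finite ?P\<close>])
    fix \<omega> assume "\<omega> \<in> set_pmf T"
    moreover obtain Q D where "\<omega> = (Q, D)" by fastforce
    ultimately have support: "(Q, D) \<in> set_pmf T"
      by simp
    have "\<forall>(Q, D)\<in>set_pmf T. Q \<subseteq> cube d \<and> card Q \<le> q \<and> (\<forall>f g. (\<forall>x\<in>Q. f x = g x) \<longrightarrow> D f = D g)"
      using bounded unfolding nonadaptive_query_bounded_def by simp
    from bspec[OF this support] have "Q \<subseteq> cube d" "card Q \<le> q"
      and "\<forall>f g. (\<forall>x\<in>Q. f x = g x) \<longrightarrow> D f = D g"
      by simp_all
    moreover have "\<forall>g. unate d g \<longrightarrow> D g"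
      using one_sided support accepts_of_accept_prob_eq_1 by blast
    ultimately have "card {(i, j)\<in>?P. \<not> D (truncated_xnor d i j)} \<le> 2 * d * (nat \<lfloor>band_radius d\<rfloor> * q)"
      by (rule card_rejected_pairs_le)
    moreover have "{p\<in>?P. \<omega> \<in> ?rejects p} = {(i, j)\<in>?P. \<not> D (truncated_xnor d i j)}"
      using \<open>\<omega> = (Q, D)\<close> by auto
    ultimately show "card {p\<in>?P. \<omega> \<in> ?rejects p} \<le> 2 * d * (nat \<lfloor>band_radius d\<rfloor> * q)"
      by simp
  qed
  finally show ?thesis .
qed

lemma nat_floor_band_radius_le:
  assumes "1 \<le> d"
  shows "real (nat \<lfloor>band_radius d\<rfloor>) \<le> 4 * sqrt (real d)"
proof -
  have "1 \<le> sqrt (real d)"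
    using assms by simp
  moreover have "real (nat \<lfloor>band_radius d\<rfloor>) \<le> band_radius d"
    unfolding band_radius_def by simp
  ultimately show ?thesis
    unfolding band_radius_def by linarith
qed

lemma query_lower_bound:
  assumes "2 \<le> d" and tester: "one_sided_unateness_tester d (3/16) q T"
  shows "sqrt (real d) / 24 \<le> real q"
proof -
  let ?W = "nat \<lfloor>band_radius d\<rfloor>"
  let ?P = "distinct_coordinate_pairs d"
  have "2/3 \<le> 1 - accept_prob T (truncated_xnor d i j)" if "(i, j) \<in> ?P" for i j
    using that tester truncated_xnor_far_from_unate[of i d j]
    unfolding one_sided_unateness_tester_def distinct_coordinate_pairs_def by simp
  then have "(\<Sum>(i, j)\<in>?P. 2/3) \<le> (\<Sum>(i, j)\<in>?P. 1 - accept_prob T (truncated_xnor d i j))"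
    by (intro sum_mono) auto
  also have "\<dots> \<le> real (2 * d * (?W * q))"
    using tester unfolding one_sided_unateness_tester_def by (intro sum_reject_prob_le) simp_all
  finally have "2/3 * (real d * (real d - 1)) \<le> 2 * real d * (real ?W * real q)"
    using assms(1) by (simp add: card_distinct_coordinate_pairs of_nat_diff)
  then have "real d * (real d - 1) \<le> real d * (3 * real ?W * real q)"
    by (simp add: algebra_simps)
  then have "real d - 1 \<le> 3 * real ?W * real q"
    using assms(1) by simp
  moreover have "3 * real ?W * real q \<le> 12 * sqrt (real d) * real q"
    using nat_floor_band_radius_le[of d] assms(1) by (simp add: mult_right_mono)
  ultimately have "real d \<le> 24 * sqrt (real d) * real q"
    using assms(1) by linarith
  then have "sqrt (real d) * sqrt (real d) \<le> sqrt (real d) * (24 * real q)"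
    by simp
  moreover have "0 < sqrt (real d)"
    using assms(1) by simp
  ultimately have "sqrt (real d) \<le> 24 * real q"
    by (rule mult_left_le_imp_le)
  then show ?thesis
    by simp
qed

theorem theorem13:
  shows "\<exists>\<epsilon>0 > 0. \<exists>c > 0. \<exists>d0::nat. \<forall>d \<ge> d0. \<forall>q T.
           one_sided_unateness_tester d \<epsilon>0 q T \<longrightarrow> real q \<ge> c * sqrt (real d)"
proof -
  have "\<forall>d \<ge> 2. \<forall>q T. one_sided_unateness_tester d (3/16) q T \<longrightarrow> real q \<ge> 1/24 * sqrt (real d)"
    using query_lower_bound by simp
  then show ?thesis
    by (intro exI[of _ "3/16"] conjI exI[of _ "1/24"] exI[of _ "2::nat"]) simp_all
qed

end
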